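(* Let $(X,d)$ be any metric space, $x_0\in X$, $n\geq 1$. Equipped with the topology induced by the pseudometric $\rho$, $\pi_n(X,x_0)$ is a topological group, and for every $r>0$ the open ball $B_\rho(e,r)=\{a\in\pi_n(X,x_0)\mid\rho(e,a)<r\}$ is an open normal subgroup.
   Context: $\Omega^n(X,x_0)$ is the set of continuous maps $\alpha:[0,1]^n\to X$ with $\alpha(\partial[0,1]^n)=\{x_0\}$, with uniform metric $\mu(\alpha,\beta)=\sup_{t\in[0,1]^n}d(\alpha(t),\beta(t))$. For $a,b\in\pi_n(X,x_0)$, $\rho(a,b)=\inf\{\mu(\alpha,\beta)\mid\alpha\in a,\beta\in b\}$, which is a pseudometric; $e$ denotes the identity element. *)

theory Defs
  imports "HOL-Analysis.Analysis" "HOL-Algebra.Coset"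
begin

text \<open>The n-cube [0,1]^n, realised inside nat => real (product topology):
  coordinates 0..n-1 range over [0,1], all other coordinates are 0.\<close>
definition cube :: "nat \<Rightarrow> (nat \<Rightarrow> real) set" where
  "cube n = {t. (\<forall>i<n. 0 \<le> t i \<and> t i \<le> 1) \<and> (\<forall>i\<ge>n. t i = 0)}"

definition cube_boundary :: "nat \<Rightarrow> (nat \<Rightarrow> real) set" where
  "cube_boundary n = {t \<in> cube n. \<exists>i<n. t i = 0 \<or> t i = 1}"

text \<open>Omega^n(X,x0): continuous maps of the cube into X sending the boundary to x0
  (only the restriction to the cube is relevant).\<close>
definition Omega :: "nat \<Rightarrow> 'a::topological_space set \<Rightarrow> 'a \<Rightarrow> ((nat \<Rightarrow> real) \<Rightarrow> 'a) set" where
  "Omega n X x0 = {\<alpha>. continuous_on (cube n) \<alpha> \<and> \<alpha> ` cube n \<subseteq> X \<and>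
                       (\<forall>t\<in>cube_boundary n. \<alpha> t = x0)}"

definition rel_homotopic :: "nat \<Rightarrow> 'a::topological_space set \<Rightarrow> 'a
    \<Rightarrow> ((nat \<Rightarrow> real) \<Rightarrow> 'a) \<Rightarrow> ((nat \<Rightarrow> real) \<Rightarrow> 'a) \<Rightarrow> bool" where
  "rel_homotopic n X x0 \<alpha> \<beta> \<longleftrightarrow>
     homotopic_with (\<lambda>f. \<forall>t\<in>cube_boundary n. f t = x0)
       (top_of_set (cube n)) (top_of_set X) \<alpha> \<beta>"

definition homotopy_rel :: "nat \<Rightarrow> 'a::topological_space set \<Rightarrow> 'a
    \<Rightarrow> (((nat \<Rightarrow> real) \<Rightarrow> 'a) \<times> ((nat \<Rightarrow> real) \<Rightarrow> 'a)) set" where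
  "homotopy_rel n X x0 = {(\<alpha>, \<beta>). \<alpha> \<in> Omega n X x0 \<and> \<beta> \<in> Omega n X x0 \<and> rel_homotopic n X x0 \<alpha> \<beta>}"

definition concat_cube :: "((nat \<Rightarrow> real) \<Rightarrow> 'a) \<Rightarrow> ((nat \<Rightarrow> real) \<Rightarrow> 'a) \<Rightarrow> (nat \<Rightarrow> real) \<Rightarrow> 'a" where
  "concat_cube \<alpha> \<beta> t = (if t 0 \<le> 1/2 then \<alpha> (t(0 := 2 * t 0)) else \<beta> (t(0 := 2 * t 0 - 1)))"

definition pi_group :: "nat \<Rightarrow> 'a::topological_space set \<Rightarrow> 'a
    \<Rightarrow> (((nat \<Rightarrow> real) \<Rightarrow> 'a) set) monoid" where
  "pi_group n X x0 =
    \<lparr>carrier = Omega n X x0 // homotopy_rel n X x0,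
     mult = (\<lambda>A B. homotopy_rel n X x0 `` {concat_cube (SOME \<alpha>. \<alpha> \<in> A) (SOME \<beta>. \<beta> \<in> B)}),
     one = homotopy_rel n X x0 `` {\<lambda>t. x0}\<rparr>"

definition mu :: "nat \<Rightarrow> ((nat \<Rightarrow> real) \<Rightarrow> 'a::metric_space) \<Rightarrow> ((nat \<Rightarrow> real) \<Rightarrow> 'a) \<Rightarrow> real" where
  "mu n \<alpha> \<beta> = (SUP t\<in>cube n. dist (\<alpha> t) (\<beta> t))"

definition rho :: "nat \<Rightarrow> ((nat \<Rightarrow> real) \<Rightarrow> 'a::metric_space) set
    \<Rightarrow> ((nat \<Rightarrow> real) \<Rightarrow> 'a) set \<Rightarrow> real" where
  "rho n a b = Inf {mu n \<alpha> \<beta> | \<alpha> \<beta>. \<alpha> \<in> a \<and> \<beta> \<in> b}"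

definition pseudometric_topology :: "'b set \<Rightarrow> ('b \<Rightarrow> 'b \<Rightarrow> real) \<Rightarrow> 'b topology" where
  "pseudometric_topology S d =
     topology (\<lambda>U. U \<subseteq> S \<and> (\<forall>a\<in>U. \<exists>r>0. {b \<in> S. d a b < r} \<subseteq> U))"

definition pi_topology :: "nat \<Rightarrow> 'a::metric_space set \<Rightarrow> 'a
    \<Rightarrow> ((nat \<Rightarrow> real) \<Rightarrow> 'a) set topology" where
  "pi_topology n X x0 = pseudometric_topology (carrier (pi_group n X x0)) (rho n)"

definition topological_group :: "('b, 'c) monoid_scheme \<Rightarrow> 'b topology \<Rightarrow> bool" where
  "topological_group G T \<longleftrightarrow>
     group G \<and> topspace T = carrier G \<and>
     continuous_map (prod_topology T T) T (\<lambda>(a, b). a \<otimes>\<^bsub>G\<^esub> b) \<and>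
     continuous_map T T (\<lambda>a. inv\<^bsub>G\<^esub> a)"

end

theory Submission
  imports Defs
begin

text \<open>Concatenation in the first cube coordinate and reversal of that coordinate make the
  homotopy classes a group.  Both operations act pointwise on representatives, so choosing
  representatives that are uniformly close gives
  \<open>\<rho>(ab, a'b') \<le> max (\<rho>(a, a')) (\<rho>(b, b'))\<close> and \<open>\<rho>(a\<inverse>, b\<inverse>) \<le> \<rho>(a, b)\<close>.
  For any group carrying a pseudometric with these two properties, multiplication and
  inversion are continuous, the strong triangle inequality
  \<open>\<rho>(a, c) \<le> max (\<rho>(a, b)) (\<rho>(b, c))\<close> makes every ball open, and the ball of radius r
  around e is a subgroup that is invariant under conjugation, since
  \<open>\<rho>(e, x h x\<inverse>) \<le> max (\<rho>(x, x)) (\<rho>(e, h)) = \<rho>(e, h)\<close>.\<close>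

section \<open>Groups with an invariant ultrametric pseudometric\<close>

lemma openin_pseudometric_topology:
  "openin (pseudometric_topology S d) U \<longleftrightarrow>
     U \<subseteq> S \<and> (\<forall>a\<in>U. \<exists>r>0. {b \<in> S. d a b < r} \<subseteq> U)"
proof -
  have "istopology (\<lambda>U. U \<subseteq> S \<and> (\<forall>a\<in>U. \<exists>r>0. {b \<in> S. d a b < r} \<subseteq> U))"
    unfolding istopology_def
  proof (rule conjI; intro allI impI)
    fix U V assume U: "U \<subseteq> S \<and> (\<forall>a\<in>U. \<exists>r>0. {b \<in> S. d a b < r} \<subseteq> U)"
      and V: "V \<subseteq> S \<and> (\<forall>a\<in>V. \<exists>r>0. {b \<in> S. d a b < r} \<subseteq> V)"
    show "U \<inter> V \<subseteq> S \<and> (\<forall>a\<in>U \<inter> V. \<exists>r>0. {b \<in> S. d a b < r} \<subseteq> U \<inter> V)"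
    proof (intro conjI ballI)
      show "U \<inter> V \<subseteq> S"
        using U by blast
      fix a assume a: "a \<in> U \<inter> V"
      then obtain r1 r2 where r: "r1 > 0" "{b \<in> S. d a b < r1} \<subseteq> U"
        "r2 > 0" "{b \<in> S. d a b < r2} \<subseteq> V"
        using U V by blast
      then have "{b \<in> S. d a b < min r1 r2} \<subseteq> U \<inter> V"
        by auto
      then show "\<exists>r>0. {b \<in> S. d a b < r} \<subseteq> U \<inter> V"
        using r by (intro exI[of _ "min r1 r2"]) auto
    qed
  next
    fix K assume K: "\<forall>U\<in>K. U \<subseteq> S \<and> (\<forall>a\<in>U. \<exists>r>0. {b \<in> S. d a b < r} \<subseteq> U)"
    show "\<Union>K \<subseteq> S \<and> (\<forall>a\<in>\<Union>K. \<exists>r>0. {b \<in> S. d a b < r} \<subseteq> \<Union>K)"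
    proof (intro conjI ballI)
      show "\<Union>K \<subseteq> S"
        using K by blast
      fix a assume "a \<in> \<Union>K"
      then obtain U where "U \<in> K" "a \<in> U"
        by blast
      then obtain r where "r > 0" "{b \<in> S. d a b < r} \<subseteq> U"
        using K by blast
      then show "\<exists>r>0. {b \<in> S. d a b < r} \<subseteq> \<Union>K"
        using \<open>U \<in> K\<close> by blast
    qed
  qed
  then show ?thesis
    unfolding pseudometric_topology_def by simp
qed

lemma topspace_pseudometric_topology: "topspace (pseudometric_topology S d) = S"
proof
  show "topspace (pseudometric_topology S d) \<subseteq> S"
    using openin_topspace[of "pseudometric_topology S d"]
    unfolding openin_pseudometric_topology by (rule conjunct1)
  have "openin (pseudometric_topology S d) S"
    unfolding openin_pseudometric_topology using zero_less_one by blast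
  then show "S \<subseteq> topspace (pseudometric_topology S d)"
    by (rule openin_subset)
qed

locale ultra_pseudometric_group = group G for G (structure) +
  fixes d :: "'g \<Rightarrow> 'g \<Rightarrow> real"
  assumes nonneg: "\<lbrakk>a \<in> carrier G; b \<in> carrier G\<rbrakk> \<Longrightarrow> 0 \<le> d a b"
    and self_zero: "a \<in> carrier G \<Longrightarrow> d a a = 0"
    and mult_le: "\<lbrakk>a \<in> carrier G; a' \<in> carrier G; b \<in> carrier G; b' \<in> carrier G\<rbrakk>
      \<Longrightarrow> d (a \<otimes> b) (a' \<otimes> b') \<le> max (d a a') (d b b')"
    and inv_le: "\<lbrakk>a \<in> carrier G; b \<in> carrier G\<rbrakk> \<Longrightarrow> d (inv a) (inv b) \<le> d a b"
begin

abbreviation T where "T \<equiv> pseudometric_topology (carrier G) d"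

lemma ultra_triangle:
  assumes "a \<in> carrier G" "b \<in> carrier G" "c \<in> carrier G"
  shows "d a c \<le> max (d a b) (d b c)"
proof -
  have "d a c = d (a \<otimes> (inv b \<otimes> b)) (b \<otimes> (inv b \<otimes> c))"
    using assms by (simp add: m_assoc [symmetric])
  also have "\<dots> \<le> max (d a b) (d (inv b \<otimes> b) (inv b \<otimes> c))"
    using assms by (intro mult_le) auto
  also have "d (inv b \<otimes> b) (inv b \<otimes> c) \<le> max (d (inv b) (inv b)) (d b c)"
    using assms by (intro mult_le) auto
  finally show ?thesis
    using assms by (simp add: self_zero nonneg max.absorb2)
qed

lemma openin_ball: "a \<in> carrier G \<Longrightarrow> openin T {b \<in> carrier G. d a b < r}"
  unfolding openin_pseudometric_topology
  using ultra_triangle nonneg by (fastforce intro!: exI[of _ r])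

lemma continuous_map_mult: "continuous_map (prod_topology T T) T (\<lambda>(a, b). a \<otimes> b)"
  unfolding continuous_map_def topspace_prod_topology topspace_pseudometric_topology
proof (intro conjI allI impI)
  fix U assume U: "openin T U"
  let ?P = "{x \<in> carrier G \<times> carrier G. (case x of (a, b) \<Rightarrow> a \<otimes> b) \<in> U}"
  show "openin (prod_topology T T) ?P"
    unfolding openin_prod_topology_alt
  proof (intro allI impI)
    fix a b assume "(a, b) \<in> ?P"
    then have ab: "a \<in> carrier G" "b \<in> carrier G" "a \<otimes> b \<in> U" by auto
    with U obtain r where r: "r > 0" "{c \<in> carrier G. d (a \<otimes> b) c < r} \<subseteq> U"
      unfolding openin_pseudometric_topology by blast
    have "{a' \<in> carrier G. d a a' < r} \<times> {b' \<in> carrier G. d b b' < r} \<subseteq> ?P"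
      using r(2) ab mult_le[of a _ b] by fastforce
    with ab r(1) show "\<exists>U' V'. openin T U' \<and> openin T V' \<and> a \<in> U' \<and> b \<in> V' \<and> U' \<times> V' \<subseteq> ?P"
      using openin_ball by (intro exI conjI) (auto simp: self_zero)
  qed
qed auto

lemma continuous_map_inv: "continuous_map T T (\<lambda>a. inv a)"
  unfolding continuous_map_def topspace_pseudometric_topology
proof (intro conjI allI impI)
  fix U assume U: "openin T U"
  show "openin T {a \<in> carrier G. inv a \<in> U}"
    unfolding openin_pseudometric_topology
  proof (intro conjI ballI)
    fix a assume "a \<in> {a \<in> carrier G. inv a \<in> U}"
    with U obtain r where r: "r > 0" "a \<in> carrier G" "{c \<in> carrier G. d (inv a) c < r} \<subseteq> U"
      unfolding openin_pseudometric_topology by blast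
    then have "{b \<in> carrier G. d a b < r} \<subseteq> {a \<in> carrier G. inv a \<in> U}"
      using inv_le[of a] by fastforce
    with r(1) show "\<exists>r>0. {b \<in> carrier G. d a b < r} \<subseteq> {a \<in> carrier G. inv a \<in> U}"
      by blast
  qed blast
qed auto

lemma topological_group: "topological_group G T"
  unfolding topological_group_def topspace_pseudometric_topology
  using continuous_map_mult continuous_map_inv is_group by blast

lemma normal_ball_one:
  assumes "r > 0"
  shows "{a \<in> carrier G. d \<one> a < r} \<lhd> G"
proof -
  let ?N = "{a \<in> carrier G. d \<one> a < r}"
  have "subgroup ?N G"
  proof (rule subgroupI)
    show "?N \<noteq> {}"
      using assms by (auto simp: self_zero)
    show "inv a \<in> ?N" if "a \<in> ?N" for a
      using that inv_le[of \<one> a] by auto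
    show "a \<otimes> b \<in> ?N" if "a \<in> ?N" "b \<in> ?N" for a b
      using that mult_le[of \<one> a \<one> b] by auto
  qed auto
  moreover have "x \<otimes> h \<otimes> inv x \<in> ?N" if "x \<in> carrier G" "h \<in> ?N" for x h
  proof -
    have "d \<one> (x \<otimes> h \<otimes> inv x) = d (x \<otimes> \<one> \<otimes> inv x) (x \<otimes> h \<otimes> inv x)"
      using that by simp
    also have "\<dots> \<le> max (d (x \<otimes> \<one>) (x \<otimes> h)) (d (inv x) (inv x))"
      using that by (intro mult_le) auto
    also have "\<dots> \<le> max (max (d x x) (d \<one> h)) 0"
      using that by (intro max.mono mult_le) (simp_all add: self_zero)
    finally show ?thesis
      using that assms by (auto simp: self_zero)
  qed
  ultimately show ?thesis
    by (auto simp: normal_inv_iff)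
qed

end

section \<open>Maps of the cube relative to its boundary\<close>

lemma compact_cube: "compact (cube n)"
proof -
  have "cube n = PiE UNIV (\<lambda>i. if i < n then {0..1} else {0})"
    unfolding cube_def PiE_UNIV_domain Pi_iff by (auto split: if_splits)
  moreover have "compactin (product_topology (\<lambda>i. euclidean) UNIV)
      (PiE UNIV (\<lambda>i::nat. if i < n then {0..1::real} else {0}))"
    unfolding compactin_PiE by auto
  ultimately show ?thesis
    unfolding euclidean_product_topology compactin_euclidean_iff by simp
qed

lemma cube_nonempty: "cube n \<noteq> {}"
proof -
  have "(\<lambda>i. 0) \<in> cube n"
    by (simp add: cube_def)
  then show ?thesis
    by blast
qed

lemma cube_boundary_subset_cube: "cube_boundary n \<subseteq> cube n"
  by (auto simp: cube_boundary_def)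

lemma continuous_on_snd_coordinate:
  "continuous_on S (\<lambda>p::'b::topological_space \<times> (nat \<Rightarrow> real). snd p i)"
  by (rule continuous_on_compose2[OF continuous_on_product_coordinates continuous_on_snd[OF continuous_on_id]])
    auto

lemma continuous_on_snd_update:
  assumes "continuous_on S f"
  shows "continuous_on S (\<lambda>p::'b::topological_space \<times> (nat \<Rightarrow> real). (snd p)(j := f p))"
proof (rule continuous_on_coordinatewise_then_product)
  show "continuous_on S (\<lambda>p. ((snd p)(j := f p)) i)" for i
    by (cases "i = j") (simp_all add: assms continuous_on_snd_coordinate)
qed

definition reverse_cube :: "((nat \<Rightarrow> real) \<Rightarrow> 'a) \<Rightarrow> (nat \<Rightarrow> real) \<Rightarrow> 'a" where
  "reverse_cube \<alpha> = (\<lambda>t. \<alpha> (t(0 := 1 - t 0)))"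

locale based_cube_maps =
  fixes X :: "'a::topological_space set" and x0 :: 'a and n :: nat
  assumes basepoint: "x0 \<in> X" and dim_pos: "1 \<le> n"
begin

abbreviation "C \<equiv> cube n"
abbreviation "B \<equiv> cube_boundary n"
abbreviation "\<Omega> \<equiv> Omega n X x0"
abbreviation "R \<equiv> homotopy_rel n X x0"

lemma cube_coord0: "t \<in> C \<Longrightarrow> 0 \<le> t 0 \<and> t 0 \<le> 1"
  using dim_pos by (auto simp: cube_def)

lemma cube_update0: "\<lbrakk>t \<in> C; 0 \<le> s; s \<le> 1\<rbrakk> \<Longrightarrow> t(0 := s) \<in> C"
  using dim_pos by (auto simp: cube_def)

lemma cube_update0_endpoint: "\<lbrakk>t \<in> C; s = 0 \<or> s = 1\<rbrakk> \<Longrightarrow> t(0 := s) \<in> B"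
  using dim_pos cube_update0[of t s] by (auto simp: cube_boundary_def)

lemma boundary_update0:
  assumes t: "t \<in> B" and s: "0 \<le> s" "s \<le> 1" and ends: "t 0 = 0 \<or> t 0 = 1 \<Longrightarrow> s = 0 \<or> s = 1"
  shows "t(0 := s) \<in> B"
proof -
  have tC: "t \<in> C"
    using cube_boundary_subset_cube t by (rule subsetD)
  obtain i where i: "i < n" "t i = 0 \<or> t i = 1"
    using t unfolding cube_boundary_def by blast
  show ?thesis
  proof (cases "i = 0")
    case True
    with i ends have "s = 0 \<or> s = 1"
      by simp
    with tC show ?thesis
      by (rule cube_update0_endpoint)
  next
    case False
    with i have "(t(0 := s)) i = 0 \<or> (t(0 := s)) i = 1"
      by simp
    with i(1) cube_update0[OF tC s] show ?thesis
      unfolding cube_boundary_def by blast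
  qed
qed

lemma Omega_const: "(\<lambda>t. x0) \<in> \<Omega>"
  using basepoint by (auto simp: Omega_def)

lemma rel_homotopicI:
  fixes h :: "real \<times> (nat \<Rightarrow> real) \<Rightarrow> 'a"
  assumes "continuous_on ({0..1} \<times> C) h" "h ` ({0..1} \<times> C) \<subseteq> X"
    "\<And>u t. \<lbrakk>0 \<le> u; u \<le> 1; t \<in> B\<rbrakk> \<Longrightarrow> h (u, t) = x0"
  shows "rel_homotopic n X x0 (\<lambda>t. h (0, t)) (\<lambda>t. h (1, t))"
  unfolding rel_homotopic_def homotopic_with_def
  using assms by (intro exI[of _ h]) (auto simp: continuous_map_subtopology_eu)

lemma rel_homotopicE:
  assumes "rel_homotopic n X x0 f g"
  obtains h :: "real \<times> (nat \<Rightarrow> real) \<Rightarrow> 'a"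
  where "continuous_on ({0..1} \<times> C) h" "h ` ({0..1} \<times> C) \<subseteq> X"
    "\<And>t. h (0, t) = f t" "\<And>t. h (1, t) = g t"
    "\<And>u t. \<lbrakk>0 \<le> u; u \<le> 1; t \<in> B\<rbrakk> \<Longrightarrow> h (u, t) = x0"
  using assms unfolding rel_homotopic_def homotopic_with_def
  by (auto simp: continuous_map_subtopology_eu Pi_iff image_subset_iff)

lemma rel_homotopic_cong:
  assumes "rel_homotopic n X x0 f g" "\<And>t. t \<in> C \<Longrightarrow> f' t = f t" "\<And>t. t \<in> C \<Longrightarrow> g' t = g t"
  shows "rel_homotopic n X x0 f' g'"
  using assms cube_boundary_subset_cube unfolding rel_homotopic_def
  by (elim homotopic_with_eq) (auto simp: subset_iff)

lemma equiv_homotopy_rel: "equiv \<Omega> R"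
proof (rule equivI)
  show "refl_on \<Omega> R"
    unfolding refl_on_def homotopy_rel_def rel_homotopic_def Omega_def
    by (auto simp: continuous_map_subtopology_eu)
  show "sym R"
    unfolding sym_def homotopy_rel_def rel_homotopic_def
    by (auto intro: homotopic_with_symD)
  show "trans R"
    unfolding trans_def homotopy_rel_def rel_homotopic_def
    by (auto intro: homotopic_with_trans)
qed (auto simp: homotopy_rel_def)

lemma rel_homotopic_refl: "\<alpha> \<in> \<Omega> \<Longrightarrow> rel_homotopic n X x0 \<alpha> \<alpha>"
  using equiv_homotopy_rel by (auto simp: equiv_def refl_on_def homotopy_rel_def)

lemma rel_homotopic_imp_Omega:
  assumes "rel_homotopic n X x0 f g"
  shows "f \<in> \<Omega> \<and> g \<in> \<Omega>"
proof -
  have h: "homotopic_with (\<lambda>f. \<forall>t\<in>B. f t = x0) (top_of_set C) (top_of_set X) f g"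
    using assms by (simp add: rel_homotopic_def)
  from homotopic_with_imp_continuous_maps[OF h] homotopic_with_imp_property[OF h]
  show ?thesis
    by (simp add: Omega_def continuous_map_subtopology_eu Pi_iff image_subset_iff)
qed


lemma rel_homotopic_reparam:
  fixes \<Phi> :: "real \<times> real \<Rightarrow> real"
  assumes \<alpha>: "\<alpha> \<in> \<Omega>" and cont: "continuous_on ({0..1} \<times> {0..1}) \<Phi>"
    and range: "\<And>u s. \<lbrakk>u \<in> {0..1}; s \<in> {0..1}\<rbrakk> \<Longrightarrow> \<Phi> (u, s) \<in> {0..1}"
    and ends: "\<And>u s. \<lbrakk>u \<in> {0..1}; s = 0 \<or> s = 1\<rbrakk> \<Longrightarrow> \<Phi> (u, s) = 0 \<or> \<Phi> (u, s) = 1"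
  shows "rel_homotopic n X x0 (\<lambda>t. \<alpha> (t(0 := \<Phi> (0, t 0)))) (\<lambda>t. \<alpha> (t(0 := \<Phi> (1, t 0))))"
proof -
  define g where "g = (\<lambda>p::real \<times> (nat \<Rightarrow> real). (snd p)(0 := \<Phi> (fst p, snd p 0)))"
  have g_cube: "g ` ({0..1} \<times> C) \<subseteq> C"
    using range cube_coord0 cube_update0 by (fastforce simp: g_def)
  have "continuous_on ({0..1} \<times> C) g"
    unfolding g_def using cube_coord0
    by (intro continuous_on_snd_update continuous_on_compose2[OF cont] continuous_intros
        continuous_on_snd_coordinate) auto
  then have "continuous_on ({0..1} \<times> C) (\<alpha> \<circ> g)"
    using \<alpha> g_cube continuous_on_compose2[of C \<alpha> _ g] by (simp add: Omega_def o_def)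
  then have "rel_homotopic n X x0 (\<lambda>t. (\<alpha> \<circ> g) (0, t)) (\<lambda>t. (\<alpha> \<circ> g) (1, t))"
  proof (rule rel_homotopicI)
    show "(\<alpha> \<circ> g) ` ({0..1} \<times> C) \<subseteq> X"
      using \<alpha> g_cube by (auto simp: Omega_def)
    fix u :: real and t assume "0 \<le> u" "u \<le> 1" "t \<in> B"
    moreover from \<open>t \<in> B\<close> have "t 0 \<in> {0..1}"
      using cube_boundary_subset_cube cube_coord0 by fastforce
    ultimately have "g (u, t) \<in> B"
      unfolding g_def using range[of u "t 0"] ends[of u "t 0"]
      by (intro boundary_update0) auto
    then show "(\<alpha> \<circ> g) (u, t) = x0"
      using \<alpha> by (simp add: Omega_def)
  qed
  then show ?thesis
    by (simp add: g_def)
qed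

lemma rel_homotopic_reparam_fixing_ends:
  assumes \<alpha>: "\<alpha> \<in> \<Omega>" and cont: "continuous_on {0..1} \<phi>"
    and range: "\<phi> ` {0..1} \<subseteq> {0..1}" and ends: "\<phi> 0 = 0" "\<phi> 1 = 1"
  shows "rel_homotopic n X x0 \<alpha> (\<lambda>t. \<alpha> (t(0 := \<phi> (t 0))))"
proof -
  define \<Phi> where "\<Phi> = (\<lambda>p::real \<times> real. (1 - fst p) * snd p + fst p * \<phi> (snd p))"
  have "\<Phi> (u, s) \<in> {0..1}" if "u \<in> {0..1}" "s \<in> {0..1}" for u s
  proof -
    have "\<phi> s \<in> {0..1}"
      using that range by blast
    then have "(1 - u) * s + u * \<phi> s \<le> (1 - u) * 1 + u * 1"
      using that by (intro add_mono mult_left_mono) auto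
    with that \<open>\<phi> s \<in> {0..1}\<close> show ?thesis
      by (simp add: \<Phi>_def)
  qed
  moreover have "continuous_on ({0..1} \<times> {0..1}) \<Phi>"
    unfolding \<Phi>_def by (intro continuous_intros continuous_on_compose2[OF cont]) auto
  ultimately have "rel_homotopic n X x0 (\<lambda>t. \<alpha> (t(0 := \<Phi> (0, t 0)))) (\<lambda>t. \<alpha> (t(0 := \<Phi> (1, t 0))))"
    using ends by (intro rel_homotopic_reparam[OF \<alpha>]) (auto simp: \<Phi>_def)
  then show ?thesis
    by (rule rel_homotopic_cong) (simp_all add: \<Phi>_def)
qed

lemma continuous_on_concat_homotopy:
  fixes h k :: "real \<times> (nat \<Rightarrow> real) \<Rightarrow> 'a"
  assumes h: "continuous_on ({0..1} \<times> C) h" and k: "continuous_on ({0..1} \<times> C) k"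
    and glue: "\<And>u t. \<lbrakk>u \<in> {0..1}; t \<in> C\<rbrakk> \<Longrightarrow> h (u, t(0 := 1)) = k (u, t(0 := 0))"
  shows "continuous_on ({0..1} \<times> C) (\<lambda>p. concat_cube (\<lambda>t. h (fst p, t)) (\<lambda>t. k (fst p, t)) (snd p))"
  unfolding concat_cube_def
proof (rule continuous_on_cases_le)
  let ?S = "{0..1} \<times> C"
  show "continuous_on ?S (\<lambda>p. snd p 0)"
    by (rule continuous_on_snd_coordinate)
  show "continuous_on {p \<in> ?S. snd p 0 \<le> 1/2} (\<lambda>p. h (fst p, (snd p)(0 := 2 * snd p 0)))"
    using cube_coord0 cube_update0
    by (intro continuous_on_compose2[OF h] continuous_intros continuous_on_snd_update
        continuous_on_snd_coordinate) auto
  show "continuous_on {p \<in> ?S. 1/2 \<le> snd p 0} (\<lambda>p. k (fst p, (snd p)(0 := 2 * snd p 0 - 1)))"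
    using cube_coord0 cube_update0
    by (intro continuous_on_compose2[OF k] continuous_intros continuous_on_snd_update
        continuous_on_snd_coordinate) auto
  fix p :: "real \<times> (nat \<Rightarrow> real)" assume "p \<in> ?S" "snd p 0 = 1/2"
  moreover have "2 * snd p 0 = 1" "2 * snd p 0 - 1 = 0"
    using \<open>snd p 0 = 1/2\<close> by simp_all
  ultimately show "h (fst p, (snd p)(0 := 2 * snd p 0)) = k (fst p, (snd p)(0 := 2 * snd p 0 - 1))"
    using glue by (simp add: mem_Times_iff)
qed

lemma concat_cube_in_image:
  assumes "t \<in> C"
  shows "concat_cube \<alpha> \<beta> t \<in> \<alpha> ` C \<union> \<beta> ` C"
proof (cases "t 0 \<le> 1/2")
  case True
  with assms have "t(0 := 2 * t 0) \<in> C"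
    using cube_coord0 by (intro cube_update0) auto
  with True show ?thesis
    by (simp add: concat_cube_def)
next
  case False
  with assms have "t(0 := 2 * t 0 - 1) \<in> C"
    using cube_coord0 by (intro cube_update0) auto
  with False show ?thesis
    by (simp add: concat_cube_def)
qed

lemma concat_cube_in_boundary_image:
  assumes "t \<in> B"
  shows "concat_cube \<alpha> \<beta> t \<in> \<alpha> ` B \<union> \<beta> ` B"
proof -
  have "t \<in> C"
    using cube_boundary_subset_cube assms by (rule subsetD)
  show ?thesis
  proof (cases "t 0 \<le> 1/2")
    case True
    with assms have "t(0 := 2 * t 0) \<in> B"
      using cube_coord0[OF \<open>t \<in> C\<close>] by (intro boundary_update0) auto
    with True show ?thesis
      by (simp add: concat_cube_def)
  next
    case False
    with assms have "t(0 := 2 * t 0 - 1) \<in> B"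
      using cube_coord0[OF \<open>t \<in> C\<close>] by (intro boundary_update0) auto
    with False show ?thesis
      by (simp add: concat_cube_def)
  qed
qed

lemma rel_homotopic_concat_cube:
  assumes "rel_homotopic n X x0 \<alpha> \<alpha>'" "rel_homotopic n X x0 \<beta> \<beta>'"
  shows "rel_homotopic n X x0 (concat_cube \<alpha> \<beta>) (concat_cube \<alpha>' \<beta>')"
proof -
  obtain h :: "real \<times> (nat \<Rightarrow> real) \<Rightarrow> 'a"
    where h: "continuous_on ({0..1} \<times> C) h" "h ` ({0..1} \<times> C) \<subseteq> X"
    "\<And>t. h (0, t) = \<alpha> t" "\<And>t. h (1, t) = \<alpha>' t"
    "\<And>u t. \<lbrakk>0 \<le> u; u \<le> 1; t \<in> B\<rbrakk> \<Longrightarrow> h (u, t) = x0"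
    using assms(1) by (rule rel_homotopicE) blast
  obtain k :: "real \<times> (nat \<Rightarrow> real) \<Rightarrow> 'a"
    where k: "continuous_on ({0..1} \<times> C) k" "k ` ({0..1} \<times> C) \<subseteq> X"
    "\<And>t. k (0, t) = \<beta> t" "\<And>t. k (1, t) = \<beta>' t"
    "\<And>u t. \<lbrakk>0 \<le> u; u \<le> 1; t \<in> B\<rbrakk> \<Longrightarrow> k (u, t) = x0"
    using assms(2) by (rule rel_homotopicE) blast
  define H where "H = (\<lambda>p. concat_cube (\<lambda>t. h (fst p, t)) (\<lambda>t. k (fst p, t)) (snd p))"
  have "rel_homotopic n X x0 (\<lambda>t. H (0, t)) (\<lambda>t. H (1, t))"
  proof (rule rel_homotopicI)
    show "continuous_on ({0..1} \<times> C) H"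
      unfolding H_def using h(1,5) k(1,5) cube_update0_endpoint
      by (intro continuous_on_concat_homotopy) auto
    show "H ` ({0..1} \<times> C) \<subseteq> X"
    proof (clarsimp simp: H_def)
      fix u :: real and t assume "0 \<le> u" "u \<le> 1" "t \<in> C"
      with h(2) k(2) have "(\<lambda>t. h (u, t)) ` C \<union> (\<lambda>t. k (u, t)) ` C \<subseteq> X"
        by auto
      with concat_cube_in_image[OF \<open>t \<in> C\<close>, of "\<lambda>t. h (u, t)" "\<lambda>t. k (u, t)"]
      show "concat_cube (\<lambda>t. h (u, t)) (\<lambda>t. k (u, t)) t \<in> X"
        by blast
    qed
    fix u :: real and t assume "0 \<le> u" "u \<le> 1" "t \<in> B"
    with h(5) k(5) have "(\<lambda>t. h (u, t)) ` B \<union> (\<lambda>t. k (u, t)) ` B \<subseteq> {x0}"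
      by auto
    with concat_cube_in_boundary_image[OF \<open>t \<in> B\<close>, of "\<lambda>t. h (u, t)" "\<lambda>t. k (u, t)"]
    show "H (u, t) = x0"
      by (auto simp: H_def)
  qed
  moreover have "(\<lambda>t. H (0, t)) = concat_cube \<alpha> \<beta>" "(\<lambda>t. H (1, t)) = concat_cube \<alpha>' \<beta>'"
    by (simp_all add: H_def h(3,4) k(3,4))
  ultimately show ?thesis
    by simp
qed

lemma Omega_concat_cube:
  assumes "\<alpha> \<in> \<Omega>" "\<beta> \<in> \<Omega>"
  shows "concat_cube \<alpha> \<beta> \<in> \<Omega>"
  using rel_homotopic_concat_cube[OF rel_homotopic_refl[OF assms(1)] rel_homotopic_refl[OF assms(2)]]
  by (simp add: rel_homotopic_imp_Omega)

lemma Omega_reverse_cube: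
  assumes "\<alpha> \<in> \<Omega>"
  shows "reverse_cube \<alpha> \<in> \<Omega>"
proof -
  have "rel_homotopic n X x0 (reverse_cube \<alpha>) (reverse_cube \<alpha>)"
    using rel_homotopic_reparam[OF assms, where \<Phi> = "\<lambda>p. 1 - snd p"]
    by (simp add: reverse_cube_def continuous_on_diff continuous_on_snd) blast
  then show ?thesis
    using rel_homotopic_imp_Omega by blast
qed

lemma concat_cube_assoc_homotopic:
  assumes "\<alpha> \<in> \<Omega>" "\<beta> \<in> \<Omega>" "\<gamma> \<in> \<Omega>"
  shows "rel_homotopic n X x0 (concat_cube \<alpha> (concat_cube \<beta> \<gamma>)) (concat_cube (concat_cube \<alpha> \<beta>) \<gamma>)"
proof -
  \<comment> \<open>piecewise linear, sending the breakpoints 1/4, 1/2 of the right side to 1/2, 3/4\<close>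
  define \<phi> where "\<phi> = (\<lambda>s::real. min (2 * s) (min (s + 1/4) (s/2 + 1/2)))"
  have "rel_homotopic n X x0 (concat_cube \<alpha> (concat_cube \<beta> \<gamma>))
      (\<lambda>t. concat_cube \<alpha> (concat_cube \<beta> \<gamma>) (t(0 := \<phi> (t 0))))"
    using assms by (intro rel_homotopic_reparam_fixing_ends Omega_concat_cube)
      (auto simp: \<phi>_def intro!: continuous_intros)
  moreover have "concat_cube \<alpha> (concat_cube \<beta> \<gamma>) (t(0 := \<phi> (t 0))) = concat_cube (concat_cube \<alpha> \<beta>) \<gamma> t"
    for t
    by (cases "t 0 \<le> 1/4"; cases "t 0 \<le> 1/2") (auto simp: \<phi>_def concat_cube_def algebra_simps)
  ultimately show ?thesis
    by (simp add: rel_homotopic_cong)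
qed

lemma const_concat_cube_homotopic:
  assumes \<alpha>: "\<alpha> \<in> \<Omega>"
  shows "rel_homotopic n X x0 (concat_cube (\<lambda>t. x0) \<alpha>) \<alpha>"
proof -
  define \<phi> where "\<phi> = (\<lambda>s::real. max 0 (2 * s - 1))"
  have "rel_homotopic n X x0 \<alpha> (\<lambda>t. \<alpha> (t(0 := \<phi> (t 0))))"
    using \<alpha> by (intro rel_homotopic_reparam_fixing_ends) (auto simp: \<phi>_def intro!: continuous_intros)
  moreover have "\<alpha> (t(0 := \<phi> (t 0))) = concat_cube (\<lambda>t. x0) \<alpha> t" if "t \<in> C" for t
    using \<alpha> cube_update0_endpoint[OF that] by (auto simp: \<phi>_def concat_cube_def Omega_def)
  ultimately have "rel_homotopic n X x0 \<alpha> (concat_cube (\<lambda>t. x0) \<alpha>)"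
    by (simp add: rel_homotopic_cong)
  then show ?thesis
    unfolding rel_homotopic_def by (rule homotopic_with_symD)
qed

lemma reverse_concat_cube_homotopic:
  assumes \<alpha>: "\<alpha> \<in> \<Omega>"
  shows "rel_homotopic n X x0 (concat_cube (reverse_cube \<alpha>) \<alpha>) (\<lambda>t. x0)"
proof -
  \<comment> \<open>Fold the first coordinate at 1/2 and then retract the fold to the face t 0 = 1.\<close>
  define \<Phi> where "\<Phi> = (\<lambda>p::real \<times> real. (1 - fst p) * \<bar>2 * snd p - 1\<bar> + fst p)"
  have "\<Phi> (u, s) \<in> {0..1}" if "u \<in> {0..1}" "s \<in> {0..1}" for u s
  proof -
    have "(1 - u) * \<bar>2 * s - 1\<bar> \<le> (1 - u) * 1"
      using that by (intro mult_left_mono) auto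
    with that show ?thesis
      by (simp add: \<Phi>_def)
  qed
  then have "rel_homotopic n X x0 (\<lambda>t. \<alpha> (t(0 := \<Phi> (0, t 0)))) (\<lambda>t. \<alpha> (t(0 := \<Phi> (1, t 0))))"
    by (intro rel_homotopic_reparam[OF \<alpha>]) (auto simp: \<Phi>_def intro!: continuous_intros)
  moreover have "concat_cube (reverse_cube \<alpha>) \<alpha> t = \<alpha> (t(0 := \<Phi> (0, t 0)))" for t
    by (simp add: concat_cube_def reverse_cube_def \<Phi>_def)
  moreover have "\<alpha> (t(0 := \<Phi> (1, t 0))) = x0" if "t \<in> C" for t
    using \<alpha> cube_update0_endpoint[OF that] by (simp add: \<Phi>_def Omega_def)
  ultimately show ?thesis
    by (simp add: rel_homotopic_cong)
qed


section \<open>The group structure on homotopy classes\<close>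

abbreviation "G \<equiv> pi_group n X x0"
abbreviation cls where "cls \<alpha> \<equiv> R `` {\<alpha>}"

lemma carrier_pi_group: "carrier G = \<Omega> // R"
  by (simp add: pi_group_def)

lemma one_pi_group: "\<one>\<^bsub>G\<^esub> = cls (\<lambda>t. x0)"
  by (simp add: pi_group_def)

lemma cls_in_carrier: "\<alpha> \<in> \<Omega> \<Longrightarrow> cls \<alpha> \<in> carrier G"
  by (simp add: carrier_pi_group quotientI)

lemma in_own_cls: "\<alpha> \<in> \<Omega> \<Longrightarrow> \<alpha> \<in> cls \<alpha>"
  using equiv_class_self[OF equiv_homotopy_rel] by blast

lemma cls_eqI: "rel_homotopic n X x0 \<alpha> \<beta> \<Longrightarrow> cls \<alpha> = cls \<beta>"
  using rel_homotopic_imp_Omega equiv_class_eq[OF equiv_homotopy_rel]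
  by (simp add: homotopy_rel_def)

lemma carrier_pi_groupE:
  assumes "a \<in> carrier G"
  obtains \<alpha> where "\<alpha> \<in> \<Omega>" "a = cls \<alpha>"
  using assms by (auto simp: carrier_pi_group elim: quotientE)

lemma cls_of_member:
  assumes "a \<in> carrier G" "\<alpha> \<in> a"
  shows "\<alpha> \<in> \<Omega>" "a = cls \<alpha>"
proof -
  obtain \<gamma> where "\<gamma> \<in> \<Omega>" "a = cls \<gamma>"
    using assms(1) by (rule carrier_pi_groupE)
  with assms(2) have "(\<gamma>, \<alpha>) \<in> R"
    by simp
  then show "\<alpha> \<in> \<Omega>" "a = cls \<alpha>"
    using \<open>a = cls \<gamma>\<close> equiv_class_eq[OF equiv_homotopy_rel] by (auto simp: homotopy_rel_def)
qed

lemma class_in_carrier_nonempty: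
  assumes "a \<in> carrier G"
  shows "a \<noteq> {}"
proof -
  obtain \<alpha> where "\<alpha> \<in> \<Omega>" "a = cls \<alpha>"
    using assms by (rule carrier_pi_groupE)
  then show ?thesis
    using in_own_cls by blast
qed

lemma mult_cls:
  assumes "\<alpha> \<in> \<Omega>" "\<beta> \<in> \<Omega>"
  shows "cls \<alpha> \<otimes>\<^bsub>G\<^esub> cls \<beta> = cls (concat_cube \<alpha> \<beta>)"
proof -
  have "(SOME \<gamma>. \<gamma> \<in> cls \<alpha>) \<in> cls \<alpha>"
    using in_own_cls[OF assms(1)] by (rule someI[where P = "\<lambda>\<gamma>. \<gamma> \<in> cls \<alpha>"])
  moreover have "(SOME \<gamma>. \<gamma> \<in> cls \<beta>) \<in> cls \<beta>"
    using in_own_cls[OF assms(2)] by (rule someI[where P = "\<lambda>\<gamma>. \<gamma> \<in> cls \<beta>"])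
  ultimately have "rel_homotopic n X x0 \<alpha> (SOME \<gamma>. \<gamma> \<in> cls \<alpha>)"
    "rel_homotopic n X x0 \<beta> (SOME \<gamma>. \<gamma> \<in> cls \<beta>)"
    unfolding Image_singleton_iff homotopy_rel_def by blast+
  from cls_eqI[OF rel_homotopic_concat_cube[OF this]] show ?thesis
    by (simp add: pi_group_def)
qed

lemma group_pi_group: "group G"
proof (rule groupI)
  show "a \<otimes>\<^bsub>G\<^esub> b \<in> carrier G" if "a \<in> carrier G" "b \<in> carrier G" for a b
    using that by (metis carrier_pi_groupE mult_cls Omega_concat_cube cls_in_carrier)
  show "\<one>\<^bsub>G\<^esub> \<in> carrier G"
    by (simp add: one_pi_group cls_in_carrier Omega_const)
  show "a \<otimes>\<^bsub>G\<^esub> b \<otimes>\<^bsub>G\<^esub> c = a \<otimes>\<^bsub>G\<^esub> (b \<otimes>\<^bsub>G\<^esub> c)"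
    if "a \<in> carrier G" "b \<in> carrier G" "c \<in> carrier G" for a b c
    using that by (elim carrier_pi_groupE)
      (simp add: mult_cls Omega_concat_cube cls_eqI[OF concat_cube_assoc_homotopic])
  fix a assume "a \<in> carrier G"
  then obtain \<alpha> where \<alpha>: "\<alpha> \<in> \<Omega>" "a = cls \<alpha>"
    by (rule carrier_pi_groupE)
  then show "\<one>\<^bsub>G\<^esub> \<otimes>\<^bsub>G\<^esub> a = a"
    by (simp add: one_pi_group mult_cls Omega_const cls_eqI[OF const_concat_cube_homotopic])
  have "cls (reverse_cube \<alpha>) \<otimes>\<^bsub>G\<^esub> a = \<one>\<^bsub>G\<^esub>"
    using \<alpha>
    by (simp add: one_pi_group mult_cls Omega_reverse_cube cls_eqI[OF reverse_concat_cube_homotopic])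
  then show "\<exists>b\<in>carrier G. b \<otimes>\<^bsub>G\<^esub> a = \<one>\<^bsub>G\<^esub>"
    using \<alpha> Omega_reverse_cube cls_in_carrier by blast
qed

lemma inv_cls: "\<alpha> \<in> \<Omega> \<Longrightarrow> inv\<^bsub>G\<^esub> (cls \<alpha>) = cls (reverse_cube \<alpha>)"
  by (rule group.inv_equality[OF group_pi_group])
    (simp_all add: one_pi_group mult_cls Omega_reverse_cube cls_eqI[OF reverse_concat_cube_homotopic]
      cls_in_carrier)

end

section \<open>The uniform pseudometric on homotopy classes\<close>

lemma rho_less_imp_mu_less:
  assumes "rho n a b < r" "a \<noteq> {}" "b \<noteq> {}"
  shows "\<exists>\<alpha>\<in>a. \<exists>\<beta>\<in>b. mu n \<alpha> \<beta> < r"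
proof -
  have "{mu n \<alpha> \<beta> | \<alpha> \<beta>. \<alpha> \<in> a \<and> \<beta> \<in> b} \<noteq> {}"
    using assms(2,3) by blast
  from cInf_lessD[OF this] assms(1) show ?thesis
    unfolding rho_def by blast
qed

locale metric_based_cube_maps = based_cube_maps X x0 n
  for X :: "'a::metric_space set" and x0 :: 'a and n :: nat
begin

lemma bdd_above_dist_Omega:
  assumes "\<alpha> \<in> \<Omega>" "\<beta> \<in> \<Omega>"
  shows "bdd_above ((\<lambda>t. dist (\<alpha> t) (\<beta> t)) ` C)"
proof -
  have "continuous_on C (\<lambda>t. dist (\<alpha> t) (\<beta> t))"
    using assms by (intro continuous_intros) (auto simp: Omega_def)
  then show ?thesis
    by (intro bounded_imp_bdd_above compact_imp_bounded compact_continuous_image compact_cube)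
qed

lemma dist_le_mu: "\<lbrakk>\<alpha> \<in> \<Omega>; \<beta> \<in> \<Omega>; t \<in> C\<rbrakk> \<Longrightarrow> dist (\<alpha> t) (\<beta> t) \<le> mu n \<alpha> \<beta>"
  unfolding mu_def by (rule cSUP_upper[OF _ bdd_above_dist_Omega])

lemma mu_le: "(\<And>t. t \<in> C \<Longrightarrow> dist (\<alpha> t) (\<beta> t) \<le> M) \<Longrightarrow> mu n \<alpha> \<beta> \<le> M"
  unfolding mu_def by (rule cSUP_least[OF cube_nonempty])

lemma mu_nonneg: "\<lbrakk>\<alpha> \<in> \<Omega>; \<beta> \<in> \<Omega>\<rbrakk> \<Longrightarrow> 0 \<le> mu n \<alpha> \<beta>"
  using cube_nonempty dist_le_mu zero_le_dist order_trans by blast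

lemma mu_self: "mu n \<alpha> \<alpha> = 0"
  using cube_nonempty by (simp add: mu_def)

lemma mu_concat_cube_le:
  assumes "\<alpha> \<in> \<Omega>" "\<alpha>' \<in> \<Omega>" "\<beta> \<in> \<Omega>" "\<beta>' \<in> \<Omega>"
  shows "mu n (concat_cube \<alpha> \<beta>) (concat_cube \<alpha>' \<beta>') \<le> max (mu n \<alpha> \<alpha>') (mu n \<beta> \<beta>')"
proof (rule mu_le)
  fix t assume t: "t \<in> C"
  show "dist (concat_cube \<alpha> \<beta> t) (concat_cube \<alpha>' \<beta>' t) \<le> max (mu n \<alpha> \<alpha>') (mu n \<beta> \<beta>')"
  proof (cases "t 0 \<le> 1/2")
    case True
    with t have "t(0 := 2 * t 0) \<in> C"
      using cube_coord0 by (intro cube_update0) auto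
    with True show ?thesis
      using dist_le_mu[OF assms(1,2)] by (fastforce simp: concat_cube_def)
  next
    case False
    with t have "t(0 := 2 * t 0 - 1) \<in> C"
      using cube_coord0 by (intro cube_update0) auto
    with False show ?thesis
      using dist_le_mu[OF assms(3,4)] by (fastforce simp: concat_cube_def)
  qed
qed

lemma mu_reverse_cube_le:
  assumes "\<alpha> \<in> \<Omega>" "\<beta> \<in> \<Omega>"
  shows "mu n (reverse_cube \<alpha>) (reverse_cube \<beta>) \<le> mu n \<alpha> \<beta>"
proof (rule mu_le)
  fix t assume "t \<in> C"
  then have "t(0 := 1 - t 0) \<in> C"
    using cube_coord0 by (intro cube_update0) auto
  then show "dist (reverse_cube \<alpha> t) (reverse_cube \<beta> t) \<le> mu n \<alpha> \<beta>"
    unfolding reverse_cube_def by (rule dist_le_mu[OF assms])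
qed

lemma mu_between_classes_nonneg:
  assumes "a \<in> carrier G" "b \<in> carrier G" "x \<in> {mu n \<alpha> \<beta> | \<alpha> \<beta>. \<alpha> \<in> a \<and> \<beta> \<in> b}"
  shows "0 \<le> x"
proof -
  obtain \<alpha> \<beta> where "x = mu n \<alpha> \<beta>" "\<alpha> \<in> a" "\<beta> \<in> b"
    using assms(3) by blast
  with assms(1,2) show ?thesis
    using cls_of_member(1) mu_nonneg by simp
qed

lemma rho_le_mu:
  assumes "a \<in> carrier G" "b \<in> carrier G" "\<alpha> \<in> a" "\<beta> \<in> b"
  shows "rho n a b \<le> mu n \<alpha> \<beta>"
  unfolding rho_def
proof (rule cInf_lower)
  show "bdd_below {mu n \<alpha> \<beta> | \<alpha> \<beta>. \<alpha> \<in> a \<and> \<beta> \<in> b}"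
    by (rule bdd_belowI[OF mu_between_classes_nonneg[OF assms(1,2)]])
qed (use assms(3,4) in blast)

lemma rho_nonneg:
  assumes "a \<in> carrier G" "b \<in> carrier G"
  shows "0 \<le> rho n a b"
  unfolding rho_def
proof (rule cInf_greatest[OF _ mu_between_classes_nonneg[OF assms]])
  show "{mu n \<alpha> \<beta> | \<alpha> \<beta>. \<alpha> \<in> a \<and> \<beta> \<in> b} \<noteq> {}"
    using class_in_carrier_nonempty[OF assms(1)] class_in_carrier_nonempty[OF assms(2)] by blast
qed

lemma rho_self:
  assumes "a \<in> carrier G"
  shows "rho n a a = 0"
proof -
  obtain \<alpha> where "\<alpha> \<in> a"
    using class_in_carrier_nonempty[OF assms] by blast
  then have "rho n a a \<le> mu n \<alpha> \<alpha>"
    using assms by (rule_tac rho_le_mu)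
  then show ?thesis
    using rho_nonneg[OF assms assms] by (simp add: mu_self)
qed

lemma rho_mult_le:
  assumes a: "a \<in> carrier G" "a' \<in> carrier G" and b: "b \<in> carrier G" "b' \<in> carrier G"
  shows "rho n (a \<otimes>\<^bsub>G\<^esub> b) (a' \<otimes>\<^bsub>G\<^esub> b') \<le> max (rho n a a') (rho n b b')"
proof (rule dense_ge)
  fix r assume "max (rho n a a') (rho n b b') < r"
  then have "rho n a a' < r" "rho n b b' < r"
    by simp_all
  then obtain \<alpha> \<alpha>' \<beta> \<beta>' where reps: "\<alpha> \<in> a" "\<alpha>' \<in> a'" "mu n \<alpha> \<alpha>' < r"
    "\<beta> \<in> b" "\<beta>' \<in> b'" "mu n \<beta> \<beta>' < r"
    using rho_less_imp_mu_less class_in_carrier_nonempty a b by meson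
  then have \<Omega>: "\<alpha> \<in> \<Omega>" "\<alpha>' \<in> \<Omega>" "\<beta> \<in> \<Omega>" "\<beta>' \<in> \<Omega>" and
    cls: "a = cls \<alpha>" "a' = cls \<alpha>'" "b = cls \<beta>" "b' = cls \<beta>'"
    using cls_of_member a b by blast+
  have "rho n (a \<otimes>\<^bsub>G\<^esub> b) (a' \<otimes>\<^bsub>G\<^esub> b') \<le> mu n (concat_cube \<alpha> \<beta>) (concat_cube \<alpha>' \<beta>')"
    unfolding cls mult_cls[OF \<Omega>(1,3)] mult_cls[OF \<Omega>(2,4)]
    by (intro rho_le_mu cls_in_carrier in_own_cls Omega_concat_cube \<Omega>)
  also have "\<dots> \<le> max (mu n \<alpha> \<alpha>') (mu n \<beta> \<beta>')"
    by (rule mu_concat_cube_le[OF \<Omega>])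
  finally show "rho n (a \<otimes>\<^bsub>G\<^esub> b) (a' \<otimes>\<^bsub>G\<^esub> b') \<le> r"
    using reps by linarith
qed

lemma rho_inv_le:
  assumes a: "a \<in> carrier G" and b: "b \<in> carrier G"
  shows "rho n (inv\<^bsub>G\<^esub> a) (inv\<^bsub>G\<^esub> b) \<le> rho n a b"
proof (rule dense_ge)
  fix r assume "rho n a b < r"
  then obtain \<alpha> \<beta> where reps: "\<alpha> \<in> a" "\<beta> \<in> b" "mu n \<alpha> \<beta> < r"
    using rho_less_imp_mu_less class_in_carrier_nonempty a b by meson
  then have \<Omega>: "\<alpha> \<in> \<Omega>" "\<beta> \<in> \<Omega>" and cls: "a = cls \<alpha>" "b = cls \<beta>"
    using cls_of_member a b by blast+
  have "rho n (inv\<^bsub>G\<^esub> a) (inv\<^bsub>G\<^esub> b) \<le> mu n (reverse_cube \<alpha>) (reverse_cube \<beta>)"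
    unfolding cls inv_cls[OF \<Omega>(1)] inv_cls[OF \<Omega>(2)]
    by (intro rho_le_mu cls_in_carrier in_own_cls Omega_reverse_cube \<Omega>)
  also have "\<dots> \<le> mu n \<alpha> \<beta>"
    by (rule mu_reverse_cube_le[OF \<Omega>])
  finally show "rho n (inv\<^bsub>G\<^esub> a) (inv\<^bsub>G\<^esub> b) \<le> r"
    using reps by linarith
qed

lemma ultra_pseudometric_group_pi_group: "ultra_pseudometric_group G (rho n)"
  by (intro ultra_pseudometric_group.intro ultra_pseudometric_group_axioms.intro group_pi_group)
    (simp_all add: rho_nonneg rho_self rho_mult_le rho_inv_le)

end

theorem proposition4p6:
  fixes X :: "'a::metric_space set" and x0 :: 'a and n :: nat
  assumes "x0 \<in> X" and "n \<ge> 1"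
  shows "topological_group (pi_group n X x0) (pi_topology n X x0) \<and>
    (\<forall>r>0. openin (pi_topology n X x0)
              {a \<in> carrier (pi_group n X x0). rho n (one (pi_group n X x0)) a < r} \<and>
            {a \<in> carrier (pi_group n X x0). rho n (one (pi_group n X x0)) a < r}
              \<lhd> pi_group n X x0)"
proof -
  interpret metric_based_cube_maps X x0 n
    using assms by unfold_locales
  interpret pi: ultra_pseudometric_group "pi_group n X x0" "rho n"
    by (rule ultra_pseudometric_group_pi_group)
  have "pi_topology n X x0 = pseudometric_topology (carrier (pi_group n X x0)) (rho n)"
    by (simp add: pi_topology_def)
  then show ?thesis
    using pi.topological_group pi.openin_ball[OF pi.one_closed] pi.normal_ball_one by simp
qed

end
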